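(* Let $\mathcal{U}=\{u_1,\ldots,u_M\}\subset\mathbb{R}\setminus\{0\}$, integers $N>k\ge1$, $\sigma_{N/k}^2>0$, and $y\in\mathbb{R}^N$. Let $[y]_{(i)}$ denote the $i$th largest entry of $y$. For $k_0\in\{0,\ldots,k\}$ define $$\xi_k^N(k_0;y)=\sum_{i=1}^{k_0}\min_{u\in\mathcal{U}}([y]_{(i)}-u)^2+\sum_{i=k_0+1}^{N-(k-k_0)}[y]_{(i)}^2+\sum_{i=N-(k-k_0)+1}^{N}\min_{u\in\mathcal{U}}([y]_{(i)}-u)^2,$$ and let $k_*\in\operatorname{argmin}_{k_0\in\{0,\ldots,k\}}\xi_k^N(k_0;y)$. Let $\mathcal{N}_1$ be the set of indices of the $k_*$ largest entries of $y$, $\mathcal{N}_2$ the set of indices of the $k-k_*$ smallest entries of $y$, and $\mathcal{N}_3=\{1,\ldots,N\}\setminus(\mathcal{N}_1\cup\mathcal{N}_2)$. Then the ML estimator $\hat{x}_{\mathrm{ML}}\in\operatorname{argmax}_{x\in\mathcal{X}_k^N(\mathcal{U})}p(y\mid x)$ satisfies $\hat{x}_{\mathrm{ML},n}=0$ for all $n\in\mathcal{N}_3$ and $\hat{x}_{\mathrm{ML},n}=\operatorname{argmin}_{u\in\mathcal{U}}(y_n-u)^2$ for all $n\in\mathcal{N}_1\cup\mathcal{N}_2$.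
   Context: $\mathcal{X}_k^N(\mathcal{U})$ is the set of $x\in\mathbb{R}^N$ with exactly $k$ nonzero entries, each belonging to $\mathcal{U}$. $p(y\mid x)=(2\pi\sigma_{N/k}^2)^{-N/2}\exp(-\|y-x\|_2^2/(2\sigma_{N/k}^2))$. Sums $\sum_{i=a}^{b}$ with $a>b$ are zero. *)

theory Defs
  imports "HOL-Analysis.Analysis"
begin

definition Xset :: "real set \<Rightarrow> nat \<Rightarrow> nat \<Rightarrow> (nat \<Rightarrow> real) set" where
  "Xset U N k = {x. (\<forall>n. n \<notin> {1..N} \<longrightarrow> x n = 0)
                    \<and> card {n \<in> {1..N}. x n \<noteq> 0} = k
                    \<and> (\<forall>n\<in>{1..N}. x n \<noteq> 0 \<longrightarrow> x n \<in> U)}"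

definition lik :: "real \<Rightarrow> nat \<Rightarrow> (nat \<Rightarrow> real) \<Rightarrow> (nat \<Rightarrow> real) \<Rightarrow> real" where
  "lik sigma2 N y x = (2 * pi * sigma2) powr (- real N / 2)
      * exp (- (\<Sum>n=1..N. (y n - x n)^2) / (2 * sigma2))"

definition sorts_desc :: "nat \<Rightarrow> (nat \<Rightarrow> real) \<Rightarrow> (nat \<Rightarrow> nat) \<Rightarrow> bool" where
  "sorts_desc N y p \<longleftrightarrow> bij_betw p {1..N} {1..N}
      \<and> (\<forall>i\<in>{1..N}. \<forall>j\<in>{1..N}. i \<le> j \<longrightarrow> y (p j) \<le> y (p i))"

definition ord_stat :: "nat \<Rightarrow> (nat \<Rightarrow> real) \<Rightarrow> nat \<Rightarrow> real" where
  "ord_stat N y i = y ((SOME p. sorts_desc N y p) i)"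

definition minU :: "real set \<Rightarrow> real \<Rightarrow> real" where
  "minU U t = Min ((\<lambda>u. (t - u)^2) ` U)"

definition xi :: "real set \<Rightarrow> nat \<Rightarrow> nat \<Rightarrow> nat \<Rightarrow> (nat \<Rightarrow> real) \<Rightarrow> real" where
  "xi U N k k0 y =
     (\<Sum>i=1..k0. minU U (ord_stat N y i))
   + (\<Sum>i=k0+1..N-(k-k0). (ord_stat N y i)^2)
   + (\<Sum>i=N-(k-k0)+1..N. minU U (ord_stat N y i))"

end

theory Submission
  imports Defs
begin

text \<open>Because \<open>(t - u)\<^sup>2 = t\<^sup>2 + (u\<^sup>2 - 2tu)\<close>, a feasible \<open>x\<close> with support \<open>S\<close> satisfies
  \<open>\<parallel>y - x\<parallel>\<^sup>2 \<ge> \<Sum>\<^sub>n y\<^sub>n\<^sup>2 + \<Sum>\<^bsub>n \<in> S\<^esub> g(y\<^sub>n)\<close> with \<open>g(t) = min\<^bsub>u \<in> U\<^esub> (u\<^sup>2 - 2tu)\<close>, and equality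
  holds when every nonzero entry of \<open>x\<close> is a nearest point of \<open>U\<close>. So maximising the likelihood
  means choosing a \<open>k\<close>-set \<open>S\<close> that minimises \<open>\<Sum>\<^bsub>n \<in> S\<^esub> g(y\<^sub>n)\<close>. Being a minimum of affine
  functions, \<open>g\<close> is concave, hence \<open>g([y]\<^sub>(\<^sub>i\<^sub>))\<close> is quasiconcave in \<open>i\<close>, and for
  quasiconcave weights some optimal \<open>S\<close> consists of the \<open>k0\<close> first and \<open>k - k0\<close> last indices in
  sorted order. That choice costs exactly \<open>\<xi>(k0; y)\<close>, so a minimiser \<open>k\<^sub>*\<close> of \<open>\<xi>\<close> gives the ML
  estimator.\<close>

definition quasiconcave_on :: "'a::linorder set \<Rightarrow> ('a \<Rightarrow> 'b::linorder) \<Rightarrow> bool" where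
  "quasiconcave_on A h \<longleftrightarrow>
     (\<forall>i\<in>A. \<forall>j\<in>A. \<forall>l\<in>A. i \<le> j \<longrightarrow> j \<le> l \<longrightarrow> min (h i) (h l) \<le> h j)"

lemma quasiconcave_onD:
  "quasiconcave_on A h \<Longrightarrow> i \<in> A \<Longrightarrow> j \<in> A \<Longrightarrow> l \<in> A \<Longrightarrow> i \<le> j \<Longrightarrow> j \<le> l
    \<Longrightarrow> min (h i) (h l) \<le> h j"
  unfolding quasiconcave_on_def by blast

lemma quasiconcave_on_subset: "quasiconcave_on A h \<Longrightarrow> B \<subseteq> A \<Longrightarrow> quasiconcave_on B h"
  unfolding quasiconcave_on_def by blast

lemma quasiconcave_on_comp_antimono:
  assumes "quasiconcave_on UNIV g" and "antimono_on A z"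
  shows "quasiconcave_on A (g \<circ> z)"
  unfolding quasiconcave_on_def
proof (intro ballI impI)
  fix i j l assume "i \<in> A" "j \<in> A" "l \<in> A" "i \<le> j" "j \<le> l"
  then have "z l \<le> z j" "z j \<le> z i" using assms(2) by (auto dest: monotone_onD)
  then show "min ((g \<circ> z) i) ((g \<circ> z) l) \<le> (g \<circ> z) j"
    using quasiconcave_onD[OF assms(1), of "z l" "z j" "z i"] by (simp add: min.commute)
qed

lemma sum_le_swap_in:
  fixes h :: "'a \<Rightarrow> 'b::ordered_ab_group_add"
  assumes "finite A" and "c \<in> A" and "T \<subseteq> A" and "T \<noteq> {}" and "\<forall>j\<in>T. h c \<le> h j"
  obtains T' where "T' \<subseteq> A" and "c \<in> T'" and "card T' = card T" and "sum h T' \<le> sum h T"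
proof (cases "c \<in> T")
  case True
  then show ?thesis using assms(3) that by blast
next
  case False
  obtain j where j: "j \<in> T" using assms(4) by blast
  have "finite T" using assms(1,3) finite_subset by blast
  then have "card (insert c (T - {j})) = card T"
    using False j card_gt_0_iff[of T] by auto
  moreover have "sum h (insert c (T - {j})) = h c - h j + sum h T"
    using False j \<open>finite T\<close> by (simp add: sum_diff1)
  moreover have "h c - h j \<le> 0" using assms(5) j by simp
  ultimately show ?thesis
    using that[of "insert c (T - {j})"] assms(2,3) j by (simp add: subset_iff)
qed

definition ends_sum :: "(nat \<Rightarrow> 'b::comm_monoid_add) \<Rightarrow> nat \<Rightarrow> nat \<Rightarrow> nat \<Rightarrow> nat \<Rightarrow> 'b" where
  "ends_sum h a b k k0 = sum h {a..<a + k0} + sum h {b - (k - k0)..<b}"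

lemma ends_sum_Suc_left: "ends_sum h a b (Suc k) (Suc k0) = h a + ends_sum h (Suc a) b k k0"
  unfolding ends_sum_def by (simp add: sum.atLeast_Suc_lessThan add.assoc)

lemma ends_sum_Suc_right:
  assumes "k0 \<le> k" and "0 < b"
  shows "ends_sum h a b (Suc k) k0 = ends_sum h a (b - 1) k k0 + h (b - 1)"
proof -
  have "b - (Suc k - k0) = b - 1 - (k - k0)" and "b = Suc (b - 1)" using assms by auto
  then have "sum h {b - (Suc k - k0)..<b} = sum h {b - 1 - (k - k0)..<b - 1} + h (b - 1)"
    by (metis diff_le_self sum.atLeastLessThan_Suc)
  then show ?thesis unfolding ends_sum_def by (simp add: add.assoc)
qed

text \<open>By quasiconcavity the smaller of the two endpoint weights bounds every weight, so that endpoint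
  can be swapped into \<open>T\<close> at no cost; removing it leaves the same problem on a shorter interval.\<close>
lemma quasiconcave_sum_ge_ends_sum:
  fixes h :: "nat \<Rightarrow> 'b::linordered_ab_group_add"
  assumes "quasiconcave_on {a..<b} h" and "T \<subseteq> {a..<b}" and "card T = k"
  shows "\<exists>k0\<le>k. ends_sum h a b k k0 \<le> sum h T"
  using assms
proof (induction k arbitrary: a b T)
  case 0
  then show ?case by (auto simp: ends_sum_def card_eq_0_iff finite_subset)
next
  case (Suc k)
  have "T \<noteq> {}" using Suc.prems(3) by auto
  then have ab: "a < b" using Suc.prems(2) by auto
  have endpoint_min: "min (h a) (h (b - 1)) \<le> h j" if "j \<in> {a..<b}" for j
    using quasiconcave_onD[OF Suc.prems(1), of a j "b - 1"] ab that by auto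
  consider "\<forall>j\<in>T. h a \<le> h j" | "\<forall>j\<in>T. h (b - 1) \<le> h j"
    using endpoint_min Suc.prems(2) by (metis min_def subsetD)
  then show ?case
  proof cases
    case 1
    with ab obtain T' where T': "T' \<subseteq> {a..<b}" "a \<in> T'" "card T' = Suc k" "sum h T' \<le> sum h T"
      using sum_le_swap_in[of "{a..<b}" a T h] Suc.prems(2,3) \<open>T \<noteq> {}\<close> by auto
    have "T' - {a} \<subseteq> {Suc a..<b}" "card (T' - {a}) = k" using T'(1-3) by auto
    moreover have "quasiconcave_on {Suc a..<b} h"
      using Suc.prems(1) by (rule quasiconcave_on_subset) auto
    ultimately obtain k0 where "k0 \<le> k" and "ends_sum h (Suc a) b k k0 \<le> sum h (T' - {a})"
      using Suc.IH by blast
    then have "ends_sum h a b (Suc k) (Suc k0) \<le> sum h T'"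
      using T'(1,2) by (simp add: ends_sum_Suc_left sum.remove finite_subset)
    then show ?thesis using \<open>k0 \<le> k\<close> T'(4) by (intro exI[of _ "Suc k0"]) (simp add: order_trans)
  next
    case 2
    moreover have "b - 1 \<in> {a..<b}" using ab by auto
    ultimately obtain T' where
      T': "T' \<subseteq> {a..<b}" "b - 1 \<in> T'" "card T' = Suc k" "sum h T' \<le> sum h T"
      using sum_le_swap_in[of "{a..<b}" "b - 1" T h] Suc.prems(2,3) \<open>T \<noteq> {}\<close> by auto
    have "T' - {b - 1} \<subseteq> {a..<b - 1}" using T'(1) by (auto simp: subset_iff)
    moreover have "card (T' - {b - 1}) = k" using T'(1-3) by (simp add: finite_subset)
    moreover have "quasiconcave_on {a..<b - 1} h"
      using Suc.prems(1) by (rule quasiconcave_on_subset) auto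
    ultimately obtain k0 where "k0 \<le> k" and "ends_sum h a (b - 1) k k0 \<le> sum h (T' - {b - 1})"
      using Suc.IH by blast
    then have "ends_sum h a b (Suc k) k0 \<le> sum h T'"
      using T'(1,2) ab by (simp add: ends_sum_Suc_right sum.remove finite_subset add.commute)
    then show ?thesis using \<open>k0 \<le> k\<close> T'(4) by (intro exI[of _ k0]) (simp add: order_trans)
  qed
qed

lemma minU_le: "finite U \<Longrightarrow> u \<in> U \<Longrightarrow> minU U t \<le> (t - u)^2"
  unfolding minU_def by (rule Min_le) auto

lemma minU_attained:
  assumes "finite U" and "U \<noteq> {}"
  obtains u where "u \<in> U" and "minU U t = (t - u)^2"
proof -
  have "minU U t \<in> (\<lambda>u. (t - u)^2) ` U"
    unfolding minU_def using assms by (intro Min_in) auto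
  then show ?thesis using that by blast
qed

lemma minU_eqI: "finite U \<Longrightarrow> u \<in> U \<Longrightarrow> \<forall>v\<in>U. (t - u)^2 \<le> (t - v)^2 \<Longrightarrow> minU U t = (t - u)^2"
  unfolding minU_def by (rule Min_eqI) auto

definition activation_cost :: "real set \<Rightarrow> real \<Rightarrow> real" where
  "activation_cost U t = minU U t - t^2"

text \<open>\<open>activation_cost U t = min\<^bsub>u \<in> U\<^esub> (u\<^sup>2 - 2tu)\<close> is a minimum of affine functions of \<open>t\<close>.\<close>
lemma quasiconcave_activation_cost:
  assumes "finite U" and "U \<noteq> {}"
  shows "quasiconcave_on UNIV (activation_cost U)"
  unfolding quasiconcave_on_def
proof (intro ballI impI)
  fix t1 t2 t3 :: real assume "t1 \<le> t2" "t2 \<le> t3"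
  obtain u where "u \<in> U" and u: "minU U t2 = (t2 - u)^2" using minU_attained assms .
  have affine_bound: "activation_cost U t \<le> u^2 - 2 * t * u" for t
    using minU_le[OF assms(1) \<open>u \<in> U\<close>, of t] unfolding activation_cost_def
    by (simp add: power2_eq_square algebra_simps)
  have "activation_cost U t2 = u^2 - 2 * t2 * u"
    using u unfolding activation_cost_def by (simp add: power2_eq_square algebra_simps)
  moreover have "t2 * u \<le> t1 * u \<or> t2 * u \<le> t3 * u"
    using \<open>t1 \<le> t2\<close> \<open>t2 \<le> t3\<close> by (cases "u \<ge> 0") (auto intro: mult_right_mono mult_right_mono_neg)
  ultimately show "min (activation_cost U t1) (activation_cost U t3) \<le> activation_cost U t2"
    using affine_bound[of t1] affine_bound[of t3] by linarith
qed

lemma sum_squares_plus_activation_cost: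
  assumes "finite A"
  shows "(\<Sum>n\<in>A. (y n)^2) + (\<Sum>n\<in>{n\<in>A. x n \<noteq> 0}. activation_cost U (y n))
    = (\<Sum>n\<in>A. if x n = 0 then (y n)^2 else minU U (y n))"
  using assms by (simp add: sum.inter_filter activation_cost_def flip: sum.distrib) (rule sum.cong, auto)

lemma sum_squares_plus_activation_le_sqdist:
  assumes "finite A" and "finite U" and "\<forall>n\<in>A. x n \<noteq> 0 \<longrightarrow> x n \<in> U"
  shows "(\<Sum>n\<in>A. (y n)^2) + (\<Sum>n\<in>{n\<in>A. x n \<noteq> 0}. activation_cost U (y n))
    \<le> (\<Sum>n\<in>A. (y n - x n)^2)"
  unfolding sum_squares_plus_activation_cost[OF assms(1)]
  using assms(3) minU_le[OF assms(2)] by (intro sum_mono) auto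

lemma sum_squares_plus_activation_eq_sqdist:
  assumes "finite A" and "finite U"
    and "\<forall>n\<in>A. x n \<noteq> 0 \<longrightarrow> x n \<in> U \<and> (\<forall>u\<in>U. (y n - x n)^2 \<le> (y n - u)^2)"
  shows "(\<Sum>n\<in>A. (y n)^2) + (\<Sum>n\<in>{n\<in>A. x n \<noteq> 0}. activation_cost U (y n))
    = (\<Sum>n\<in>A. (y n - x n)^2)"
  unfolding sum_squares_plus_activation_cost[OF assms(1)]
  using assms(3) minU_eqI[OF assms(2)] by (intro sum.cong) auto

lemma sorts_desc_values_unique:
  assumes "sorts_desc N y p" and "sorts_desc N y q" and "i \<in> {1..N}"
  shows "y (p i) = y (q i)"
proof -
  let ?vals = "\<lambda>r. rev (map (y \<circ> r) [1..<Suc N])"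
  have vals: "mset (?vals r) = image_mset y (mset_set {1..N}) \<and> sorted (?vals r)"
    if "sorts_desc N y r" for r
  proof
    have "bij_betw r {1..N} {1..N}" using that unfolding sorts_desc_def by blast
    then have "image_mset r (mset_set {1..N}) = mset_set {1..N}"
      by (simp add: image_mset_mset_set bij_betw_def)
    then show "mset (?vals r) = image_mset y (mset_set {1..N})"
      by (simp del: upt_Suc flip: multiset.map_comp add: atLeastLessThanSuc_atLeastAtMost)
    show "sorted (?vals r)"
      using that unfolding sorts_desc_def sorted_rev_iff_nth_mono by (auto simp del: upt_Suc)
  qed
  have "?vals p = ?vals q"
    using vals[OF assms(1)] vals[OF assms(2)] by (metis properties_for_sort)
  then show ?thesis
    using assms(3) by (auto simp del: upt_Suc dest: arg_cong[where f = "\<lambda>l. rev l ! (i - 1)"])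
qed

lemma ord_stat_eq:
  assumes "sorts_desc N y p" and "i \<in> {1..N}"
  shows "ord_stat N y i = y (p i)"
  unfolding ord_stat_def
  using sorts_desc_values_unique[OF someI[of "sorts_desc N y", OF assms(1)] assms] .

definition extremes :: "nat \<Rightarrow> nat \<Rightarrow> nat \<Rightarrow> nat set" where
  "extremes N k k0 = {1..k0} \<union> {N - (k - k0) + 1..N}"

lemma
  assumes "k0 \<le> k" and "k \<le> N"
  shows extremes_subset: "extremes N k k0 \<subseteq> {1..N}"
    and card_extremes: "card (extremes N k k0) = k"
    and sum_extremes: "sum f (extremes N k k0) = sum f {1..k0} + sum f {N - (k - k0) + 1..N}"
proof -
  have disjoint: "{1..k0} \<inter> {N - (k - k0) + 1..N} = {}" using assms by auto
  show "extremes N k k0 \<subseteq> {1..N}" using assms unfolding extremes_def by auto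
  show "card (extremes N k k0) = k"
    unfolding extremes_def card_Un_disjoint[OF finite_atLeastAtMost finite_atLeastAtMost disjoint]
    using assms by simp
  show "sum f (extremes N k k0) = sum f {1..k0} + sum f {N - (k - k0) + 1..N}"
    unfolding extremes_def by (rule sum.union_disjoint[OF finite_atLeastAtMost finite_atLeastAtMost disjoint])
qed

lemma xi_eq_sum_squares_plus_activation:
  assumes "sorts_desc N y p" and "k0 \<le> k" and "k \<le> N"
  shows "xi U N k k0 y
    = (\<Sum>n=1..N. (y n)^2) + (\<Sum>i\<in>extremes N k k0. activation_cost U (y (p i)))"
proof -
  define M where "M = N - (k - k0)"
  have "k0 \<le> M" "M \<le> N" unfolding M_def using assms(2,3) by auto
  then have split: "sum g {1..N} = sum g {1..k0} + sum g {k0+1..M} + sum g {M+1..N}"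
    for g :: "nat \<Rightarrow> real"
    using sum.ub_add_nat[of 1 k0 g "M - k0"] sum.ub_add_nat[of 1 M g "N - M"] by simp
  have "bij_betw p {1..N} {1..N}" using assms(1) unfolding sorts_desc_def by blast
  then have "(\<Sum>n=1..N. (y n)^2) = (\<Sum>i=1..N. (y (p i))^2)"
    by (rule sum.reindex_bij_betw[symmetric])
  moreover have "xi U N k k0 y = (\<Sum>i=1..k0. minU U (y (p i))) + (\<Sum>i=k0+1..M. (y (p i))^2)
      + (\<Sum>i=M+1..N. minU U (y (p i)))"
    unfolding xi_def M_def[symmetric] using \<open>k0 \<le> M\<close> \<open>M \<le> N\<close>
    by (simp add: ord_stat_eq[OF assms(1)])
  ultimately show ?thesis
    using split[of "\<lambda>i. (y (p i))^2"]
    unfolding sum_extremes[OF assms(2,3)] M_def[symmetric] activation_cost_def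
    by (simp add: sum_subtractf)
qed

lemma xi_le_sum_squares_plus_activation:
  assumes "sorts_desc N y p" and "finite U" and "U \<noteq> {}"
    and "k \<le> N" and "S \<subseteq> {1..N}" and "card S = k"
  shows "\<exists>k0\<le>k. xi U N k k0 y \<le> (\<Sum>n=1..N. (y n)^2) + (\<Sum>n\<in>S. activation_cost U (y n))"
proof -
  define h where "h = activation_cost U \<circ> (y \<circ> p)"
  define T where "T = {i\<in>{1..N}. p i \<in> S}"
  have "inj_on p {1..N}" and p_onto: "p ` {1..N} = {1..N}"
    using assms(1) unfolding sorts_desc_def bij_betw_def by blast+
  have "T \<subseteq> {1..N}" unfolding T_def by blast
  with \<open>inj_on p {1..N}\<close> have "inj_on p T" by (rule inj_on_subset)
  have "p ` T = S"
  proof (intro equalityI subsetI)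
    fix n assume "n \<in> S"
    then obtain i where "i \<in> {1..N}" and "n = p i" using assms(5) p_onto by blast
    then show "n \<in> p ` T" using \<open>n \<in> S\<close> unfolding T_def by blast
  qed (auto simp: T_def)
  then have sum_S: "(\<Sum>n\<in>S. activation_cost U (y n)) = sum h T"
    unfolding h_def using sum.reindex[OF \<open>inj_on p T\<close>] by simp
  have "antimono_on {1..<Suc N} (y \<circ> p)"
    using assms(1) unfolding sorts_desc_def by (intro monotone_onI) auto
  then have "quasiconcave_on {1..<Suc N} h"
    unfolding h_def using quasiconcave_activation_cost[OF assms(2,3)]
    by (intro quasiconcave_on_comp_antimono)
  moreover have "T \<subseteq> {1..<Suc N}"
    using \<open>T \<subseteq> {1..N}\<close> by (simp add: atLeastLessThanSuc_atLeastAtMost)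
  moreover have "card T = k"
    using assms(6) card_image[OF \<open>inj_on p T\<close>] \<open>p ` T = S\<close> by simp
  ultimately obtain k0 where "k0 \<le> k" and k0: "ends_sum h 1 (Suc N) k k0 \<le> sum h T"
    using quasiconcave_sum_ge_ends_sum by blast
  have "{1..<1 + k0} = {1..k0}" and "{Suc N - (k - k0)..<Suc N} = {N - (k - k0) + 1..N}"
    using \<open>k0 \<le> k\<close> assms(4) by auto
  then have "xi U N k k0 y = (\<Sum>n=1..N. (y n)^2) + ends_sum h 1 (Suc N) k k0"
    using xi_eq_sum_squares_plus_activation[OF assms(1) \<open>k0 \<le> k\<close> assms(4)]
    unfolding sum_extremes[OF \<open>k0 \<le> k\<close> assms(4)] ends_sum_def h_def by simp
  then show ?thesis
    using k0 \<open>k0 \<le> k\<close> sum_S by (intro exI[of _ k0]) simp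
qed

lemma xi_le_sqdist:
  assumes "x \<in> Xset U N k" and "sorts_desc N y p" and "finite U" and "U \<noteq> {}" and "k \<le> N"
  shows "\<exists>k0\<le>k. xi U N k k0 y \<le> (\<Sum>n=1..N. (y n - x n)^2)"
proof -
  let ?S = "{n\<in>{1..N}. x n \<noteq> 0}"
  have "card ?S = k" using assms(1) unfolding Xset_def by simp
  then obtain k0 where "k0 \<le> k"
    and "xi U N k k0 y \<le> (\<Sum>n=1..N. (y n)^2) + (\<Sum>n\<in>?S. activation_cost U (y n))"
    using xi_le_sum_squares_plus_activation[OF assms(2-5), of ?S] by blast
  moreover have "\<dots> \<le> (\<Sum>n=1..N. (y n - x n)^2)"
    using assms(1) unfolding Xset_def by (intro sum_squares_plus_activation_le_sqdist[OF _ assms(3)]) auto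
  ultimately show ?thesis by (blast intro: order_trans)
qed

lemma extremes_estimator:
  assumes "sorts_desc N y p" and "finite U" and "0 \<notin> U" and "k0 \<le> k" and "k \<le> N"
    and "\<forall>n. n \<notin> p ` extremes N k k0 \<longrightarrow> x n = 0"
    and "\<forall>n\<in>p ` extremes N k k0. x n \<in> U \<and> (\<forall>u\<in>U. (y n - x n)^2 \<le> (y n - u)^2)"
  shows "x \<in> Xset U N k" and "(\<Sum>n=1..N. (y n - x n)^2) = xi U N k k0 y"
proof -
  let ?E = "extremes N k k0"
  have "inj_on p {1..N}" and "p ` {1..N} = {1..N}"
    using assms(1) unfolding sorts_desc_def bij_betw_def by blast+
  then have "inj_on p ?E" and "p ` ?E \<subseteq> {1..N}"
    using extremes_subset[OF assms(4,5)] by (auto intro: inj_on_subset)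
  then have support: "{n\<in>{1..N}. x n \<noteq> 0} = p ` ?E"
    using assms(3,6,7) by fastforce
  moreover have "card (p ` ?E) = k"
    using card_image[OF \<open>inj_on p ?E\<close>] card_extremes[OF assms(4,5)] by simp
  moreover have "\<forall>n. n \<notin> {1..N} \<longrightarrow> x n = 0"
    using assms(6) \<open>p ` ?E \<subseteq> {1..N}\<close> by blast
  moreover have optimal: "\<forall>n\<in>{1..N}. x n \<noteq> 0
      \<longrightarrow> x n \<in> U \<and> (\<forall>u\<in>U. (y n - x n)^2 \<le> (y n - u)^2)"
    using support assms(7) by blast
  ultimately show "x \<in> Xset U N k" unfolding Xset_def by simp
  have "(\<Sum>n=1..N. (y n - x n)^2)
      = (\<Sum>n=1..N. (y n)^2) + (\<Sum>n\<in>p ` ?E. activation_cost U (y n))"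
    using sum_squares_plus_activation_eq_sqdist[OF finite_atLeastAtMost assms(2) optimal]
    unfolding support by simp
  also have "\<dots> = xi U N k k0 y"
    using xi_eq_sum_squares_plus_activation[OF assms(1,4,5)]
    by (simp add: sum.reindex[OF \<open>inj_on p ?E\<close>])
  finally show "(\<Sum>n=1..N. (y n - x n)^2) = xi U N k k0 y" .
qed

lemma lik_le_lik:
  assumes "sigma2 > 0" and "(\<Sum>n=1..N. (y n - x' n)^2) \<le> (\<Sum>n=1..N. (y n - x n)^2)"
  shows "lik sigma2 N y x \<le> lik sigma2 N y x'"
  unfolding lik_def using assms by (intro mult_left_mono) (auto intro: divide_right_mono)

theorem proposition1:
  fixes U :: "real set" and N k :: nat and sigma2 :: real
    and y :: "nat \<Rightarrow> real" and kstar :: nat and p :: "nat \<Rightarrow> nat"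
    and xhat :: "nat \<Rightarrow> real"
  assumes "finite U" and "U \<noteq> {}" and "0 \<notin> U"
    and "1 \<le> k" and "k < N" and "sigma2 > 0"
    and "kstar \<le> k" and "\<forall>k0\<le>k. xi U N k kstar y \<le> xi U N k k0 y"
    and "sorts_desc N y p"
  defines "N1 \<equiv> p ` {1..kstar}"
    and "N2 \<equiv> p ` {N - (k - kstar) + 1..N}"
  defines "N3 \<equiv> {1..N} - (N1 \<union> N2)"
  assumes "\<forall>n. n \<notin> {1..N} \<longrightarrow> xhat n = 0"
    and "\<forall>n\<in>N3. xhat n = 0"
    and "\<forall>n\<in>N1 \<union> N2. xhat n \<in> U \<and> (\<forall>u\<in>U. (y n - xhat n)^2 \<le> (y n - u)^2)"
  shows "xhat \<in> Xset U N k \<and> (\<forall>x\<in>Xset U N k. lik sigma2 N y x \<le> lik sigma2 N y xhat)"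
proof -
  have "k \<le> N" using assms(5) by simp
  have "N1 \<union> N2 = p ` extremes N k kstar" unfolding N1_def N2_def extremes_def by auto
  then have "\<forall>n. n \<notin> p ` extremes N k kstar \<longrightarrow> xhat n = 0"
    and "\<forall>n\<in>p ` extremes N k kstar. xhat n \<in> U \<and> (\<forall>u\<in>U. (y n - xhat n)^2 \<le> (y n - u)^2)"
    using assms(13-15) unfolding N3_def by (blast, simp)
  note xhat = extremes_estimator[OF assms(9,1,3,7) \<open>k \<le> N\<close> this]
  have "(\<Sum>n=1..N. (y n - xhat n)^2) \<le> (\<Sum>n=1..N. (y n - x n)^2)" if x: "x \<in> Xset U N k" for x
  proof -
    obtain k0 where "k0 \<le> k" and "xi U N k k0 y \<le> (\<Sum>n=1..N. (y n - x n)^2)"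
      using xi_le_sqdist[OF x assms(9,1,2) \<open>k \<le> N\<close>] by blast
    then show ?thesis using xhat(2) assms(8) by (metis order_trans)
  qed
  then show ?thesis using xhat(1) lik_le_lik[OF assms(6)] by blast
qed

end
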